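(* Let $V$ be a complex vector space of dimension $k$. Let $\mu$ and $\nu$ be partitions with at most $k$ parts, with $\nu$ obtained from $\mu$ by adding one cell. Let $\iota\colon S_\nu V^*\to V^*\otimes S_\mu V^*$ be the $GL(V)$-equivariant inclusion. Let $P\colon S_\mu V^*\otimes V^*\to S_\nu V^*$ be the $GL(V)$-equivariant projection. Let $T'\colon S_\mu V^*\otimes S_\nu V^*\to S_\nu V^*\otimes S_\mu V^*$ be the composition of $$\mathrm{id}\otimes\iota\colon S_\mu V^*\otimes S_\nu V^*\to S_\mu V^*\otimes V^*\otimes S_\mu V^*$$ with $$P\otimes \mathrm{id}\colon S_\mu V^*\otimes V^*\otimes S_\mu V^*\to S_\nu V^*\otimes S_\mu V^*.$$ Suppose the isotypic component with highest weight $\pi$ appears with the same multiplicity $M$ in $S_\mu V^*\otimes S_\nu V^*$ and in $S_\mu V^*\otimes V^*\otimes S_\mu V^*$. Then the isotypic component with highest weight $\pi$ appears in the image of $T'$ with multiplicity $M$.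
   Context: $S_\lambda V$ denotes the irreducible polynomial $GL(V)$-module (Schur module) indexed by the partition $\lambda$. By the Pieri rule, $S_\nu V^*$ occurs with multiplicity one in $V^*\otimes S_\mu V^*$, so $\iota$ and $P$ are unique up to scale. The map $T'$ is the Young flattening of the $GL(V)$-invariant tensor in $V^*\otimes S_\mu V^*\otimes S_\nu V$. *)

theory Defs
  imports "HOL-Analysis.Analysis" "HOL-Library.Function_Algebras"
begin

text \<open>V = C^k with basis e_0..e_(k-1).  A tensor of order n over V
  is a coefficient function on index lists of length n with entries < k
  (and 0 elsewhere).  The dual space V* is identified with C^k via the dual basis;
  the GL(V)-action on V* is the standard action twisted by the automorphism
  g -> (g^-1)^T of GL_k, which changes neither invariant subspaces, nor equivariance,
  nor isotypic decompositions.  Hence we work with the standard (polynomial) action,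
  under which S_lambda V* corresponds to the irreducible of highest weight lambda.\<close>

definition fscale :: "complex \<Rightarrow> (nat list \<Rightarrow> complex) \<Rightarrow> (nat list \<Rightarrow> complex)" where
  "fscale c f = (\<lambda>xs. c * f xs)"

global_interpretation fv: vector_space fscale
  by unfold_locales (auto simp: fscale_def algebra_simps fun_eq_iff)

definition idx :: "nat \<Rightarrow> nat \<Rightarrow> nat list set" where
  "idx k n = {xs. length xs = n \<and> set xs \<subseteq> {..<k}}"

definition tens :: "nat \<Rightarrow> nat \<Rightarrow> (nat list \<Rightarrow> complex) set" where
  "tens k n = {t. \<forall>xs. xs \<notin> idx k n \<longrightarrow> t xs = 0}"

definition outer :: "nat \<Rightarrow> (nat list \<Rightarrow> complex) \<Rightarrow> (nat list \<Rightarrow> complex) \<Rightarrow> (nat list \<Rightarrow> complex)" where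
  "outer a f g = (\<lambda>xs. f (take a xs) * g (drop a xs))"

definition tprod :: "nat \<Rightarrow> (nat list \<Rightarrow> complex) set \<Rightarrow> (nat list \<Rightarrow> complex) set \<Rightarrow> (nat list \<Rightarrow> complex) set" where
  "tprod a A B = fv.span {outer a f g | f g. f \<in> A \<and> g \<in> B}"

definition GL :: "nat \<Rightarrow> (nat \<Rightarrow> nat \<Rightarrow> complex) set" where
  "GL k = {g. \<exists>h. (\<forall>i<k. \<forall>j<k. (\<Sum>l<k. g i l * h l j) = (if i = j then 1 else 0))
                 \<and> (\<forall>i<k. \<forall>j<k. (\<Sum>l<k. h i l * g l j) = (if i = j then 1 else 0))}"

definition Borel :: "nat \<Rightarrow> (nat \<Rightarrow> nat \<Rightarrow> complex) set" where
  "Borel k = {b \<in> GL k. \<forall>i<k. \<forall>j<k. j < i \<longrightarrow> b i j = 0}"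

definition rho :: "nat \<Rightarrow> nat \<Rightarrow> (nat \<Rightarrow> nat \<Rightarrow> complex) \<Rightarrow> (nat list \<Rightarrow> complex) \<Rightarrow> (nat list \<Rightarrow> complex)" where
  "rho k n g t = (\<lambda>xs. if xs \<in> idx k n
      then (\<Sum>js\<in>idx k n. (\<Prod>m<n. g (xs ! m) (js ! m)) * t js) else 0)"

definition GL_stable :: "nat \<Rightarrow> nat \<Rightarrow> (nat list \<Rightarrow> complex) set \<Rightarrow> bool" where
  "GL_stable k n W \<longleftrightarrow> fv.subspace W \<and> W \<subseteq> tens k n \<and> (\<forall>g\<in>GL k. \<forall>w\<in>W. rho k n g w \<in> W)"

definition irreducible_rep :: "nat \<Rightarrow> nat \<Rightarrow> (nat list \<Rightarrow> complex) set \<Rightarrow> bool" where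
  "irreducible_rep k n W \<longleftrightarrow> GL_stable k n W \<and> W \<noteq> {0} \<and>
     (\<forall>U. U \<subseteq> W \<longrightarrow> GL_stable k n U \<longrightarrow> U = {0} \<or> U = W)"

definition hwv :: "nat \<Rightarrow> nat \<Rightarrow> (nat list \<Rightarrow> complex) set \<Rightarrow> (nat \<Rightarrow> nat) \<Rightarrow> (nat list \<Rightarrow> complex) set" where
  "hwv k n W \<pi> = {w \<in> W. \<forall>b\<in>Borel k. rho k n b w = fscale (\<Prod>i<k. b i i ^ \<pi> i) w}"

text \<open>Multiplicity of the isotypic component of highest weight pi in the
  (completely reducible, polynomial) representation W = dimension of the space of
  highest weight vectors of weight pi.\<close>
definition mult :: "nat \<Rightarrow> nat \<Rightarrow> (nat list \<Rightarrow> complex) set \<Rightarrow> (nat \<Rightarrow> nat) \<Rightarrow> nat" where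
  "mult k n W \<pi> = fv.dim (hwv k n W \<pi>)"

definition partition_k :: "nat \<Rightarrow> (nat \<Rightarrow> nat) \<Rightarrow> bool" where
  "partition_k k lam \<longleftrightarrow> (\<forall>i j. i \<le> j \<longrightarrow> lam j \<le> lam i) \<and> (\<forall>i\<ge>k. lam i = 0)"

definition psize :: "nat \<Rightarrow> (nat \<Rightarrow> nat) \<Rightarrow> nat" where
  "psize k lam = (\<Sum>i<k. lam i)"

definition schur_module :: "nat \<Rightarrow> (nat \<Rightarrow> nat) \<Rightarrow> (nat list \<Rightarrow> complex) set \<Rightarrow> bool" where
  "schur_module k lam S \<longleftrightarrow> irreducible_rep k (psize k lam) S \<and> hwv k (psize k lam) S lam \<noteq> {0}"

definition equivariant_map :: "nat \<Rightarrow> nat \<Rightarrow> nat \<Rightarrow> (nat list \<Rightarrow> complex) set \<Rightarrow> (nat list \<Rightarrow> complex) set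
     \<Rightarrow> ((nat list \<Rightarrow> complex) \<Rightarrow> (nat list \<Rightarrow> complex)) \<Rightarrow> bool" where
  "equivariant_map k m n A B L \<longleftrightarrow>
     (\<forall>x\<in>A. L x \<in> B) \<and>
     (\<forall>x\<in>A. \<forall>y\<in>A. L (x + y) = L x + L y) \<and>
     (\<forall>c. \<forall>x\<in>A. L (fscale c x) = fscale c (L x)) \<and>
     (\<forall>g\<in>GL k. \<forall>x\<in>A. L (rho k m g x) = rho k n g (L x))"

text \<open>id_a \<otimes> L, where L maps order-m to order-n tensors: result has order a + n.\<close>
definition id_tensor :: "nat \<Rightarrow> nat \<Rightarrow> nat \<Rightarrow> nat \<Rightarrow> ((nat list \<Rightarrow> complex) \<Rightarrow> (nat list \<Rightarrow> complex))
     \<Rightarrow> (nat list \<Rightarrow> complex) \<Rightarrow> (nat list \<Rightarrow> complex)" where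
  "id_tensor k a m n L t = (\<lambda>xs. if xs \<in> idx k (a + n)
      then L (\<lambda>ys. if ys \<in> idx k m then t (take a xs @ ys) else 0) (drop a xs) else 0)"

text \<open>L \<otimes> id_b, where L maps order-m to order-n tensors: result has order n + b.\<close>
definition tensor_id :: "nat \<Rightarrow> nat \<Rightarrow> nat \<Rightarrow> nat \<Rightarrow> ((nat list \<Rightarrow> complex) \<Rightarrow> (nat list \<Rightarrow> complex))
     \<Rightarrow> (nat list \<Rightarrow> complex) \<Rightarrow> (nat list \<Rightarrow> complex)" where
  "tensor_id k m n b L t = (\<lambda>xs. if xs \<in> idx k (n + b)
      then L (\<lambda>ys. if ys \<in> idx k m then t (ys @ drop n xs) else 0) (take n xs) else 0)"

end

theory Submission
  imports Defs
begin

(* Write T' = Q o J with J = id (x) iota and Q = P (x) id.  As S_nu is irreducible, iota is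
   injective and P is onto S_nu, so J is injective and the highest weight vectors of weight pi
   in J(S_mu (x) S_nu) form an M-dimensional subspace of those of S_mu (x) V* (x) S_mu, which
   also have dimension M: the two spaces coincide.  By Weyl's unitary trick ker P has a stable
   complement W in S_mu (x) V*, and Q maps W (x) S_mu isomorphically onto S_nu (x) S_mu; hence
   every highest weight vector of S_nu (x) S_mu is the Q-image of one of S_mu (x) V* (x) S_mu,
   i.e. of one in the image of J.  So the image of T' has exactly the highest weight vectors
   of S_nu (x) S_mu, a space of dimension M since S_nu (x) S_mu and S_mu (x) S_nu are
   isomorphic. *)

section \<open>Index lists and tensors\<close>

type_synonym tensor = "nat list \<Rightarrow> complex"

lemma fscale_apply [simp]: "fscale c f xs = c * f xs"
  by (simp add: fscale_def)

lemma sum_fun_apply: "sum f A x = (\<Sum>a\<in>A. f a x)"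
  by (induction A rule: infinite_finite_induct) auto

lemma mem_idx: "xs \<in> idx k n \<longleftrightarrow> length xs = n \<and> set xs \<subseteq> {..<k}"
  by (simp add: idx_def)

lemma finite_idx [simp]: "finite (idx k n)"
  unfolding idx_def using finite_lists_length_eq[of "{..<k}" n] by (simp add: conj_commute)

lemma take_idx: "xs \<in> idx k (a + b) \<Longrightarrow> take a xs \<in> idx k a"
  using set_take_subset[of a xs] by (auto simp: mem_idx)

lemma drop_idx: "xs \<in> idx k (a + b) \<Longrightarrow> drop a xs \<in> idx k b"
  using set_drop_subset[of a xs] by (auto simp: mem_idx)

lemma append_idx: "p \<in> idx k a \<Longrightarrow> q \<in> idx k b \<Longrightarrow> p @ q \<in> idx k (a + b)"
  by (simp add: mem_idx)

lemma idx_add_eq_image_append: "idx k (a + b) = (\<lambda>(p, q). p @ q) ` (idx k a \<times> idx k b)"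
proof (intro set_eqI iffI)
  fix xs assume "xs \<in> idx k (a + b)"
  then show "xs \<in> (\<lambda>(p, q). p @ q) ` (idx k a \<times> idx k b)"
    using take_idx drop_idx by (intro image_eqI[where x = "(take a xs, drop a xs)"]) auto
qed (auto simp: append_idx)

lemma inj_on_append_idx: "inj_on (\<lambda>(p, q). p @ q) (idx k a \<times> idx k b)"
  by (auto simp: inj_on_def mem_idx)

lemma not_idx_add_split:
  "xs \<notin> idx k (a + b) \<Longrightarrow> take a xs \<notin> idx k a \<or> drop a xs \<notin> idx k b"
  by (metis append_idx append_take_drop_id)

lemma tens_subspace: "fv.subspace (tens k n)"
  by (auto simp: fv.subspace_def tens_def)

lemma tensD: "t \<in> tens k n \<Longrightarrow> xs \<notin> idx k n \<Longrightarrow> t xs = 0"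
  by (simp add: tens_def)

lemma tens_eq_zeroI:
  assumes "t \<in> tens k n" "\<And>xs. xs \<in> idx k n \<Longrightarrow> t xs = 0"
  shows "t = 0"
proof
  fix xs show "t xs = 0 xs"
    using assms tensD[OF assms(1)] by (cases "xs \<in> idx k n") simp_all
qed

definition delta :: "nat list \<Rightarrow> nat list \<Rightarrow> complex" where
  "delta ys = (\<lambda>xs. if ys = xs then 1 else 0)"

lemma tens_subset_span_delta: "tens k n \<subseteq> fv.span (delta ` idx k n)"
proof
  fix t assume t: "t \<in> tens k n"
  have "t = (\<Sum>ys\<in>idx k n. fscale (t ys) (delta ys))"
  proof
    fix xs
    have "(\<Sum>ys\<in>idx k n. fscale (t ys) (delta ys)) xs = (\<Sum>ys\<in>idx k n. if ys = xs then t ys else 0)"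
      by (simp add: sum_fun_apply delta_def if_distrib cong: if_cong)
    also have "\<dots> = t xs"
      using tensD[OF t] by (simp add: sum.delta)
    finally show "t xs = (\<Sum>ys\<in>idx k n. fscale (t ys) (delta ys)) xs" ..
  qed
  also have "\<dots> \<in> fv.span (delta ` idx k n)"
    by (intro fv.span_sum fv.span_scale fv.span_base) auto
  finally show "t \<in> fv.span (delta ` idx k n)" .
qed

lemma outer_apply: "outer a f g xs = f (take a xs) * g (drop a xs)"
  by (simp add: outer_def)

lemma outer_tens: "f \<in> tens k a \<Longrightarrow> g \<in> tens k b \<Longrightarrow> outer a f g \<in> tens k (a + b)"
  by (auto simp: tens_def outer_apply dest: not_idx_add_split)

lemma outer_assoc: "outer a f (outer b g h) = outer (a + b) (outer a f g) h"
  by (simp add: outer_def take_take drop_take drop_drop mult.assoc add.commute)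

lemma outer_in_tprod: "f \<in> A \<Longrightarrow> g \<in> B \<Longrightarrow> outer a f g \<in> tprod a A B"
  unfolding tprod_def by (rule fv.span_base) blast

lemma tprod_subspace: "fv.subspace (tprod a A B)"
  unfolding tprod_def by (rule fv.subspace_span)

lemma tprod_tens: "A \<subseteq> tens k a \<Longrightarrow> B \<subseteq> tens k b \<Longrightarrow> tprod a A B \<subseteq> tens k (a + b)"
  unfolding tprod_def by (rule fv.span_minimal[OF _ tens_subspace]) (auto intro!: outer_tens)

lemma tprod_mono: "A \<subseteq> A' \<Longrightarrow> B \<subseteq> B' \<Longrightarrow> tprod a A B \<subseteq> tprod a A' B'"
  unfolding tprod_def by (rule fv.span_mono) blast

lemma rho_outside_idx: "xs \<notin> idx k n \<Longrightarrow> rho k n g t xs = 0"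
  by (simp add: rho_def)

lemma rho_tens: "rho k n g t \<in> tens k n"
  by (simp add: tens_def rho_outside_idx)

lemma prod_lessThan_add: "(\<Prod>m<(a::nat) + b. F m) = (\<Prod>m<a. F m) * (\<Prod>m<b. F (a + m))"
  by (induction b) (auto simp: mult_ac)

lemma rho_outer: "rho k (a + b) g (outer a f h) = outer a (rho k a g f) (rho k b g h)"
proof
  fix xs
  show "rho k (a + b) g (outer a f h) xs = outer a (rho k a g f) (rho k b g h) xs"
  proof (cases "xs \<in> idx k (a + b)")
    case False
    then show ?thesis
      using not_idx_add_split[OF False] by (auto simp: outer_apply rho_outside_idx)
  next
    case xs: True
    let ?G = "\<lambda>n ys js. \<Prod>m<n. g (ys ! m) (js ! m)"
    have split: "?G (a + b) xs (p @ q) = ?G a (take a xs) p * ?G b (drop a xs) q"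
      if "p \<in> idx k a" "q \<in> idx k b" for p q
      using that xs unfolding prod_lessThan_add
      by (simp add: mem_idx nth_append)
    have "rho k (a + b) g (outer a f h) xs = (\<Sum>js\<in>idx k (a + b). ?G (a + b) xs js * outer a f h js)"
      using xs by (simp add: rho_def)
    also have "\<dots> = (\<Sum>(p, q)\<in>idx k a \<times> idx k b. ?G (a + b) xs (p @ q) * outer a f h (p @ q))"
      unfolding idx_add_eq_image_append[of k a b] sum.reindex[OF inj_on_append_idx]
      by (simp add: case_prod_unfold)
    also have "\<dots> = (\<Sum>(p, q)\<in>idx k a \<times> idx k b.
        (?G a (take a xs) p * f p) * (?G b (drop a xs) q * h q))"
      by (intro sum.cong refl) (auto simp: split outer_apply mem_idx mult_ac)
    also have "\<dots> = outer a (rho k a g f) (rho k b g h) xs"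
      using take_idx[OF xs] drop_idx[OF xs]
      by (simp add: sum_product sum.cartesian_product outer_apply rho_def)
    finally show ?thesis .
  qed
qed

section \<open>Maps that are linear on a subspace\<close>

(* The maps iota and P of the theorem are only linear on their domains, so linearity is taken
   relative to a set rather than as the library's global Vector_Spaces.linear. *)

definition linear_on :: "tensor set \<Rightarrow> (tensor \<Rightarrow> tensor) \<Rightarrow> bool" where
  "linear_on D L \<longleftrightarrow>
     (\<forall>x\<in>D. \<forall>y\<in>D. L (x + y) = L x + L y) \<and> (\<forall>c. \<forall>x\<in>D. L (fscale c x) = fscale c (L x))"

lemma linear_on_add: "linear_on D L \<Longrightarrow> x \<in> D \<Longrightarrow> y \<in> D \<Longrightarrow> L (x + y) = L x + L y"
  by (simp add: linear_on_def)

lemma linear_on_scale: "linear_on D L \<Longrightarrow> x \<in> D \<Longrightarrow> L (fscale c x) = fscale c (L x)"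
  by (simp add: linear_on_def)

lemma linear_on_subset: "linear_on D L \<Longrightarrow> D' \<subseteq> D \<Longrightarrow> linear_on D' L"
  unfolding linear_on_def by (meson subsetD)

lemma linear_on_zero: "linear_on D L \<Longrightarrow> fv.subspace D \<Longrightarrow> L 0 = 0"
  using linear_on_scale[of D L 0 0] by (simp add: fv.subspace_0)

lemma linear_on_comp: "linear_on D L \<Longrightarrow> linear_on E L' \<Longrightarrow> L ` D \<subseteq> E \<Longrightarrow> linear_on D (L' \<circ> L)"
  unfolding linear_on_def by (simp add: image_subset_iff)

lemma linear_on_rho: "linear_on D (rho k n g)"
  by (simp add: linear_on_def rho_def fun_eq_iff distrib_right sum.distrib sum_distrib_left mult_ac)

lemma linear_on_outer: "linear_on D (outer a f)"
  by (auto simp: linear_on_def outer_def fun_eq_iff algebra_simps)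

lemma subspace_linear_on_image:
  assumes D: "fv.subspace D" and L: "linear_on D L"
  shows "fv.subspace (L ` D)"
proof (rule fv.subspaceI)
  show "0 \<in> L ` D" using linear_on_zero[OF L D] fv.subspace_0[OF D] by force
  show "x + y \<in> L ` D" if x: "x \<in> L ` D" and y: "y \<in> L ` D" for x y
  proof -
    obtain x' y' where x': "x' \<in> D" and y': "y' \<in> D" and "x = L x'" "y = L y'" using x y by blast
    then have "x + y = L (x' + y')" by (simp add: linear_on_add[OF L x' y'])
    then show ?thesis using fv.subspace_add[OF D x' y'] by blast
  qed
  show "fscale c x \<in> L ` D" if x: "x \<in> L ` D" for c x
  proof -
    obtain x' where x': "x' \<in> D" and "x = L x'" using x by blast
    then have "fscale c x = L (fscale c x')" by (simp add: linear_on_scale[OF L x'])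
    then show ?thesis using fv.subspace_scale[OF D x'] by blast
  qed
qed

lemma subspace_linear_on_vimage:
  assumes D: "fv.subspace D" and L: "linear_on D L" and E: "fv.subspace E"
  shows "fv.subspace {x \<in> D. L x \<in> E}"
  using fv.subspace_0[OF D] fv.subspace_add[OF D] fv.subspace_scale[OF D] linear_on_zero[OF L D]
    fv.subspace_0[OF E] fv.subspace_add[OF E] fv.subspace_scale[OF E]
    linear_on_add[OF L] linear_on_scale[OF L]
  by (intro fv.subspaceI) auto

lemma subspace_linear_on_equalizer:
  assumes "fv.subspace D" "linear_on D L" "linear_on D L'"
  shows "fv.subspace {x \<in> D. L x = L' x}"
  using fv.subspace_0[OF assms(1)] fv.subspace_add[OF assms(1)] fv.subspace_scale[OF assms(1)]
    linear_on_zero[OF assms(2,1)] linear_on_zero[OF assms(3,1)]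
    linear_on_add[OF assms(2)] linear_on_scale[OF assms(2)]
    linear_on_add[OF assms(3)] linear_on_scale[OF assms(3)]
  by (intro fv.subspaceI) auto

lemma linear_on_image_span:
  assumes L: "linear_on (fv.span G) L"
  shows "L ` fv.span G = fv.span (L ` G)"
proof
  have "fv.span G \<subseteq> {x \<in> fv.span G. L x \<in> fv.span (L ` G)}"
    by (intro fv.span_minimal subspace_linear_on_vimage[OF fv.subspace_span L fv.subspace_span])
      (auto intro: fv.span_base)
  then show "L ` fv.span G \<subseteq> fv.span (L ` G)" by blast
  show "fv.span (L ` G) \<subseteq> L ` fv.span G"
    by (intro fv.span_minimal subspace_linear_on_image[OF fv.subspace_span L])
      (auto intro: fv.span_base)
qed

lemma linear_on_eq_on_span:
  assumes "linear_on (fv.span G) L" "linear_on (fv.span G) L'" "\<And>x. x \<in> G \<Longrightarrow> L x = L' x"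
    and "x \<in> fv.span G"
  shows "L x = L' x"
proof -
  have "fv.span G \<subseteq> {x \<in> fv.span G. L x = L' x}"
    using assms(3)
    by (intro fv.span_minimal subspace_linear_on_equalizer[OF fv.subspace_span assms(1,2)])
      (auto intro: fv.span_base)
  then show ?thesis using assms(4) by blast
qed

lemma inj_on_linear_onI:
  assumes D: "fv.subspace D" and L: "linear_on D L" and ker: "\<And>x. x \<in> D \<Longrightarrow> L x = 0 \<Longrightarrow> x = 0"
  shows "inj_on L D"
proof
  fix x y assume x: "x \<in> D" and y: "y \<in> D" and eq: "L x = L y"
  have "L (x - y) = L x - L y"
    using linear_on_add[OF L x fv.subspace_scale[OF D y, of "-1"]] linear_on_scale[OF L y, of "-1"]
    by simp
  then have "L (x - y) = 0" using eq by simp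
  then have "x - y = 0" by (rule ker[OF fv.subspace_diff[OF D x y]])
  then show "x = y" by simp
qed

lemma tprod_assoc_subset: "tprod a F (tprod b G H) \<subseteq> tprod (a + b) (tprod a F G) H"
  unfolding tprod_def[of a F "tprod b G H"]
proof (rule fv.span_minimal[OF _ tprod_subspace], rule subsetI)
  fix t assume "t \<in> {outer a f h |f h. f \<in> F \<and> h \<in> tprod b G H}"
  then obtain f h where t: "t = outer a f h" and f: "f \<in> F" and h: "h \<in> tprod b G H" by blast
  have "outer a f ` tprod b G H = fv.span (outer a f ` {outer b g s |g s. g \<in> G \<and> s \<in> H})"
    unfolding tprod_def by (rule linear_on_image_span[OF linear_on_outer])
  also have "\<dots> \<subseteq> tprod (a + b) (tprod a F G) H"
  proof (rule fv.span_minimal[OF _ tprod_subspace])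
    show "outer a f ` {outer b g s |g s. g \<in> G \<and> s \<in> H} \<subseteq> tprod (a + b) (tprod a F G) H"
      using f by (auto simp: outer_assoc intro!: outer_in_tprod)
  qed
  finally show "t \<in> tprod (a + b) (tprod a F G) H" using t h by blast
qed

section \<open>Dimension of finitely spanned subspaces\<close>

context vector_space
begin

lemma independent_card_le_dim_finite_span:
  assumes "independent B" "B \<subseteq> T" "T \<subseteq> span F" "finite F"
  shows "finite B \<and> card B \<le> dim T"
proof -
  obtain C where C: "C \<subseteq> T" "independent C" "T \<subseteq> span C" "card C = dim T"
    by (rule basis_exists)
  have "finite C" using independent_span_bound[OF assms(4) C(2) order.trans[OF C(1) assms(3)]] ..
  then show ?thesis
    using independent_span_bound[OF _ assms(1) order.trans[OF assms(2) C(3)]] C(4) by simp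
qed

lemma subspace_eq_of_dim_le:
  assumes S: "subspace S" and ST: "S \<subseteq> T" and T: "T \<subseteq> span F" "finite F" and dim: "dim T \<le> dim S"
  shows "S = T"
proof (rule ccontr)
  assume "S \<noteq> T"
  then obtain y where y: "y \<in> T" "y \<notin> S" using ST by blast
  obtain B where B: "B \<subseteq> S" "independent B" "S \<subseteq> span B" "card B = dim S"
    by (rule basis_exists)
  have "y \<notin> span B" using y(2) span_minimal[OF B(1) S] by blast
  then have "independent (insert y B)" using B(2) by (rule independent_insertI)
  moreover have "insert y B \<subseteq> T" using y(1) B(1) ST by blast
  ultimately have "finite (insert y B) \<and> card (insert y B) \<le> dim T"
    by (rule independent_card_le_dim_finite_span[OF _ _ T])
  then have "finite B" "card (insert y B) \<le> dim T" by simp_all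
  moreover have "y \<notin> B" using y(2) B(1) by blast
  ultimately have "Suc (dim S) \<le> dim T" using B(4) by simp
  then show False using dim by simp
qed

end

interpretation fv_pair: vector_space_pair fscale fscale ..

lemma dim_linear_on_inj_image:
  assumes X: "fv.subspace X" "X \<subseteq> fv.span F" "finite F"
    and L: "linear_on X L" and inj: "inj_on L X"
  shows "fv.dim (L ` X) = fv.dim X"
proof -
  obtain B where B: "B \<subseteq> X" "fv.independent B" "X \<subseteq> fv.span B" "card B = fv.dim X"
    by (rule fv.basis_exists)
  have X_eq: "X = fv.span B" using B fv.span_minimal[OF B(1) X(1)] by blast
  obtain g where g: "Vector_Spaces.linear fscale fscale g" "\<And>x. x \<in> B \<Longrightarrow> g x = L x"
    using fv_pair.linear_independent_extend[OF B(2)] by blast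
  have "linear_on X g" using fv_pair.linear_add[OF g(1)] fv_pair.linear_scale[OF g(1)]
    by (simp add: linear_on_def)
  then have gL: "x \<in> X \<Longrightarrow> g x = L x" for x
    using linear_on_eq_on_span[of B g L x] L g(2) X_eq by simp
  then have "inj_on g (fv.span B)" using inj X_eq by (simp add: inj_on_def)
  then have "fv.independent (g ` B)" "inj_on g B"
    using fv_pair.linear_independent_injective_image[OF g(1) B(2)] inj_on_subset[OF _ fv.span_superset]
    by simp_all
  then have "fv.dim (g ` fv.span B) = card B"
    by (simp add: fv_pair.linear_span_image[OF g(1), symmetric] fv.dim_eq_card_independent card_image)
  moreover have "g ` X = L ` X" using gL by (rule image_cong[OF refl])
  ultimately show ?thesis using B(4) X_eq by simp
qed

section \<open>Stable subspaces, equivariant maps and highest weight vectors\<close>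

lemma GL_stableD:
  assumes "GL_stable k n W"
  shows "fv.subspace W" "W \<subseteq> tens k n" "\<And>g w. g \<in> GL k \<Longrightarrow> w \<in> W \<Longrightarrow> rho k n g w \<in> W"
  using assms by (auto simp: GL_stable_def)

lemma GL_stable_tens: "GL_stable k n (tens k n)"
  by (simp add: GL_stable_def tens_subspace rho_tens)

lemma GL_stable_tprod:
  assumes A: "GL_stable k a A" and B: "GL_stable k b B"
  shows "GL_stable k (a + b) (tprod a A B)"
  unfolding GL_stable_def
proof (intro conjI ballI tprod_subspace)
  show "tprod a A B \<subseteq> tens k (a + b)" using A B by (intro tprod_tens) (auto dest: GL_stableD)
  fix g t assume g: "g \<in> GL k" and t: "t \<in> tprod a A B"
  have "rho k (a + b) g ` tprod a A B
      = fv.span (rho k (a + b) g ` {outer a f h |f h. f \<in> A \<and> h \<in> B})"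
    unfolding tprod_def by (rule linear_on_image_span[OF linear_on_rho])
  also have "\<dots> \<subseteq> tprod a A B"
    using GL_stableD(3)[OF A g] GL_stableD(3)[OF B g]
    by (intro fv.span_minimal[OF _ tprod_subspace]) (auto simp: rho_outer intro!: outer_in_tprod)
  finally show "rho k (a + b) g t \<in> tprod a A B" using t by blast
qed

lemma equivariant_mapD:
  assumes "equivariant_map k m n A B L"
  shows "linear_on A L" "L ` A \<subseteq> B"
    "\<And>g x. g \<in> GL k \<Longrightarrow> x \<in> A \<Longrightarrow> L (rho k m g x) = rho k n g (L x)"
  using assms by (auto simp: equivariant_map_def linear_on_def)

lemma equivariant_mapI:
  assumes "linear_on A L" "L ` A \<subseteq> B"
    "\<And>g x. g \<in> GL k \<Longrightarrow> x \<in> A \<Longrightarrow> L (rho k m g x) = rho k n g (L x)"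
  shows "equivariant_map k m n A B L"
  using assms by (auto simp: equivariant_map_def linear_on_def)

lemma equivariant_map_mono:
  "equivariant_map k m n A B L \<Longrightarrow> A' \<subseteq> A \<Longrightarrow> B \<subseteq> B' \<Longrightarrow> equivariant_map k m n A' B' L"
  unfolding equivariant_map_def by blast

lemma equivariant_map_comp:
  assumes L: "equivariant_map k l m A B L" and L': "equivariant_map k m n B C L'"
  shows "equivariant_map k l n A C (L' \<circ> L)"
proof (rule equivariant_mapI)
  show "linear_on A (L' \<circ> L)"
    by (rule linear_on_comp[OF equivariant_mapD(1)[OF L] equivariant_mapD(1)[OF L']
          equivariant_mapD(2)[OF L]])
  show "(L' \<circ> L) ` A \<subseteq> C"
    using equivariant_mapD(2)[OF L] equivariant_mapD(2)[OF L'] by auto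
  show "(L' \<circ> L) (rho k l g x) = rho k n g ((L' \<circ> L) x)" if "g \<in> GL k" "x \<in> A" for g x
    using that equivariant_mapD(2,3)[OF L] equivariant_mapD(3)[OF L'] by auto
qed

lemma equivariant_map_tprodI:
  assumes Y: "GL_stable k a Y" and Z: "GL_stable k b Z"
    and L: "linear_on (tprod a Y Z) L" "L ` tprod a Y Z \<subseteq> E"
    and outer: "\<And>g y z. g \<in> GL k \<Longrightarrow> y \<in> Y \<Longrightarrow> z \<in> Z \<Longrightarrow>
        L (outer a (rho k a g y) (rho k b g z)) = rho k n g (L (outer a y z))"
  shows "equivariant_map k (a + b) n (tprod a Y Z) E L"
proof (rule equivariant_mapI[OF L])
  fix g t assume g: "g \<in> GL k" and t: "t \<in> tprod a Y Z"
  have "(L \<circ> rho k (a + b) g) t = (rho k n g \<circ> L) t"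
  proof (rule linear_on_eq_on_span[OF _ _ _ t[unfolded tprod_def]], fold tprod_def)
    show "linear_on (tprod a Y Z) (L \<circ> rho k (a + b) g)"
      using GL_stableD(3)[OF GL_stable_tprod[OF Y Z] g]
      by (intro linear_on_comp[OF linear_on_rho L(1)]) blast
    show "linear_on (tprod a Y Z) (rho k n g \<circ> L)"
      by (rule linear_on_comp[OF L(1) linear_on_rho subset_UNIV])
    show "(L \<circ> rho k (a + b) g) x = (rho k n g \<circ> L) x"
      if "x \<in> {outer a y z |y z. y \<in> Y \<and> z \<in> Z}" for x
      using that g outer by (auto simp: rho_outer)
  qed
  then show "L (rho k (a + b) g t) = rho k n g (L t)" by simp
qed

lemma GL_stable_kernel:
  assumes D: "GL_stable k m D" and L: "equivariant_map k m n D E L"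
  shows "GL_stable k m {x \<in> D. L x = 0}"
proof -
  have "fv.subspace {x \<in> D. L x = 0}"
    using subspace_linear_on_vimage[OF GL_stableD(1)[OF D] equivariant_mapD(1)[OF L], of "{0}"]
    by (simp add: fv.subspace_def)
  then show ?thesis
    using GL_stableD[OF D] equivariant_mapD(3)[OF L]
    by (auto simp: GL_stable_def linear_on_zero[OF linear_on_rho fv.subspace_UNIV])
qed

lemma GL_stable_image:
  assumes D: "GL_stable k m D" and L: "equivariant_map k m n D E L" and E: "E \<subseteq> tens k n"
  shows "GL_stable k n (L ` D)"
  unfolding GL_stable_def
proof (intro conjI ballI)
  show "fv.subspace (L ` D)"
    by (rule subspace_linear_on_image[OF GL_stableD(1)[OF D] equivariant_mapD(1)[OF L]])
  show "L ` D \<subseteq> tens k n" using equivariant_mapD(2)[OF L] E by blast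
  fix g y assume g: "g \<in> GL k" and "y \<in> L ` D"
  then obtain x where x: "x \<in> D" "y = L x" by blast
  then have "rho k n g y = L (rho k m g x)" using equivariant_mapD(3)[OF L g] by simp
  then show "rho k n g y \<in> L ` D" using GL_stableD(3)[OF D g x(1)] by blast
qed

lemma irreducible_equivariant_inj:
  assumes S: "irreducible_rep k n S" and L: "equivariant_map k n m S E L" and nz: "\<exists>s\<in>S. L s \<noteq> 0"
  shows "inj_on L S"
proof -
  have S_stable: "GL_stable k n S" using S by (simp add: irreducible_rep_def)
  have "{s \<in> S. L s = 0} = {0} \<or> {s \<in> S. L s = 0} = S"
    using S GL_stable_kernel[OF S_stable L] by (simp add: irreducible_rep_def)
  then have "{s \<in> S. L s = 0} = {0}" using nz by blast
  then show ?thesis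
    using inj_on_linear_onI[OF GL_stableD(1)[OF S_stable] equivariant_mapD(1)[OF L]] by blast
qed

lemma irreducible_equivariant_onto:
  assumes D: "GL_stable k m D" and S: "irreducible_rep k n S"
    and L: "equivariant_map k m n D S L" and nz: "\<exists>x\<in>D. L x \<noteq> 0"
  shows "L ` D = S"
proof -
  have "GL_stable k n (L ` D)"
    using GL_stable_image[OF D L] S by (simp add: irreducible_rep_def GL_stable_def)
  then have "L ` D = {0} \<or> L ` D = S"
    using S equivariant_mapD(2)[OF L] by (simp add: irreducible_rep_def)
  then show ?thesis using nz by blast
qed

lemma hwv_subset: "hwv k n X \<pi> \<subseteq> X"
  by (auto simp: hwv_def)

lemma hwv_mono: "X \<subseteq> Y \<Longrightarrow> hwv k n X \<pi> \<subseteq> hwv k n Y \<pi>"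
  by (auto simp: hwv_def)

lemma subspace_hwv:
  assumes X: "fv.subspace X"
  shows "fv.subspace (hwv k n X \<pi>)"
proof (rule fv.subspaceI)
  show "0 \<in> hwv k n X \<pi>"
    using fv.subspace_0[OF X] linear_on_zero[OF linear_on_rho fv.subspace_UNIV]
    by (simp add: hwv_def fv.scale_zero_right)
  show "x + y \<in> hwv k n X \<pi>" if "x \<in> hwv k n X \<pi>" "y \<in> hwv k n X \<pi>" for x y
    using that fv.subspace_add[OF X] linear_on_add[OF linear_on_rho UNIV_I UNIV_I]
    by (simp add: hwv_def fv.scale_right_distrib)
  show "fscale c x \<in> hwv k n X \<pi>" if "x \<in> hwv k n X \<pi>" for c x
    using that fv.subspace_scale[OF X] linear_on_scale[OF linear_on_rho UNIV_I]
    by (simp add: hwv_def fv.scale_scale mult.commute)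
qed

lemma Borel_subset_GL: "Borel k \<subseteq> GL k"
  by (auto simp: Borel_def)

lemma hwv_image_subset:
  assumes L: "equivariant_map k m n X Y L"
  shows "L ` hwv k m X \<pi> \<subseteq> hwv k n (L ` X) \<pi>"
proof safe
  fix x assume x: "x \<in> hwv k m X \<pi>"
  then have "x \<in> X" by (simp add: hwv_def)
  moreover have "rho k n b (L x) = fscale (\<Prod>i<k. b i i ^ \<pi> i) (L x)" if b: "b \<in> Borel k" for b
  proof -
    have "b \<in> GL k" using b Borel_subset_GL by blast
    then have "rho k n b (L x) = L (rho k m b x)"
      by (rule equivariant_mapD(3)[OF L _ \<open>x \<in> X\<close>, symmetric])
    also have "\<dots> = L (fscale (\<Prod>i<k. b i i ^ \<pi> i) x)" using x b by (simp add: hwv_def)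
    finally show ?thesis by (simp add: linear_on_scale[OF equivariant_mapD(1)[OF L] \<open>x \<in> X\<close>])
  qed
  ultimately show "L x \<in> hwv k n (L ` X) \<pi>" unfolding hwv_def by blast
qed

lemma hwv_image_inj:
  assumes X: "GL_stable k m X" and L: "equivariant_map k m n X Y L" and inj: "inj_on L X"
  shows "hwv k n (L ` X) \<pi> = L ` hwv k m X \<pi>"
proof
  show "L ` hwv k m X \<pi> \<subseteq> hwv k n (L ` X) \<pi>" by (rule hwv_image_subset[OF L])
  show "hwv k n (L ` X) \<pi> \<subseteq> L ` hwv k m X \<pi>"
  proof
    fix y assume y: "y \<in> hwv k n (L ` X) \<pi>"
    then obtain x where x: "x \<in> X" "y = L x" by (auto simp: hwv_def)
    have "rho k m b x = fscale (\<Prod>i<k. b i i ^ \<pi> i) x" if b: "b \<in> Borel k" for b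
    proof (rule inj_onD[OF inj])
      have "b \<in> GL k" using b Borel_subset_GL by blast
      then have "L (rho k m b x) = rho k n b (L x)" by (rule equivariant_mapD(3)[OF L _ x(1)])
      also have "\<dots> = fscale (\<Prod>i<k. b i i ^ \<pi> i) (L x)" using y b x(2) by (simp add: hwv_def)
      also have "\<dots> = L (fscale (\<Prod>i<k. b i i ^ \<pi> i) x)"
        by (rule linear_on_scale[OF equivariant_mapD(1)[OF L] x(1), symmetric])
      finally show "L (rho k m b x) = L (fscale (\<Prod>i<k. b i i ^ \<pi> i) x)" .
      show "rho k m b x \<in> X" using GL_stableD(3)[OF X \<open>b \<in> GL k\<close> x(1)] .
      show "fscale (\<Prod>i<k. b i i ^ \<pi> i) x \<in> X" using fv.subspace_scale[OF GL_stableD(1)[OF X] x(1)] .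
    qed
    then have "x \<in> hwv k m X \<pi>" using x by (simp add: hwv_def)
    then show "y \<in> L ` hwv k m X \<pi>" using x by blast
  qed
qed

lemma mult_image_inj:
  assumes X: "GL_stable k m X" and L: "equivariant_map k m n X Y L" and inj: "inj_on L X"
  shows "mult k n (L ` X) \<pi> = mult k m X \<pi>"
  unfolding mult_def hwv_image_inj[OF X L inj]
proof (rule dim_linear_on_inj_image)
  show "fv.subspace (hwv k m X \<pi>)" by (rule subspace_hwv[OF GL_stableD(1)[OF X]])
  show "hwv k m X \<pi> \<subseteq> fv.span (delta ` idx k m)"
    using hwv_subset GL_stableD(2)[OF X] tens_subset_span_delta by blast
  show "linear_on (hwv k m X \<pi>) L"
    by (rule linear_on_subset[OF equivariant_mapD(1)[OF L] hwv_subset])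
  show "inj_on L (hwv k m X \<pi>)" by (rule inj_on_subset[OF inj hwv_subset])
qed simp

lemma hwv_eq_of_mult_le:
  assumes "fv.subspace X'" "X' \<subseteq> X" "X \<subseteq> tens k n" "mult k n X \<pi> \<le> mult k n X' \<pi>"
  shows "hwv k n X' \<pi> = hwv k n X \<pi>"
proof (rule fv.subspace_eq_of_dim_le)
  show "fv.subspace (hwv k n X' \<pi>)" by (rule subspace_hwv[OF assms(1)])
  show "hwv k n X' \<pi> \<subseteq> hwv k n X \<pi>" by (rule hwv_mono[OF assms(2)])
  show "hwv k n X \<pi> \<subseteq> fv.span (delta ` idx k n)"
    using hwv_subset assms(3) tens_subset_span_delta by blast
  show "fv.dim (hwv k n X \<pi>) \<le> fv.dim (hwv k n X' \<pi>)" using assms(4) by (simp add: mult_def)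
qed simp

section \<open>Tensoring a map with an identity\<close>

definition prefix_slice :: "nat \<Rightarrow> nat \<Rightarrow> nat list \<Rightarrow> tensor \<Rightarrow> tensor" where
  "prefix_slice k m p t = (\<lambda>ys. if ys \<in> idx k m then t (p @ ys) else 0)"

lemma linear_on_prefix_slice: "linear_on D (prefix_slice k m p)"
  by (simp add: linear_on_def prefix_slice_def fun_eq_iff distrib_left)

lemma prefix_slice_outer:
  "length p = a \<Longrightarrow> h \<in> tens k m \<Longrightarrow> prefix_slice k m p (outer a f h) = fscale (f p) h"
  by (auto simp: prefix_slice_def outer_apply fun_eq_iff tensD)

lemma prefix_slice_tprod:
  assumes Z: "fv.subspace Z" "Z \<subseteq> tens k m" and t: "t \<in> tprod a Y Z" and p: "length p = a"
  shows "prefix_slice k m p t \<in> Z"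
proof -
  have "prefix_slice k m p ` tprod a Y Z
      = fv.span (prefix_slice k m p ` {outer a y z |y z. y \<in> Y \<and> z \<in> Z})"
    unfolding tprod_def by (rule linear_on_image_span[OF linear_on_prefix_slice])
  also have "\<dots> \<subseteq> Z"
    using Z p by (intro fv.span_minimal) (auto simp: prefix_slice_outer fv.subspace_scale)
  finally show ?thesis using t by blast
qed

lemma tens_eq_zero_of_prefix_slices:
  assumes t: "t \<in> tens k (a + m)" and zero: "\<And>p. p \<in> idx k a \<Longrightarrow> prefix_slice k m p t = 0"
  shows "t = 0"
proof (rule tens_eq_zeroI[OF t])
  fix xs assume xs: "xs \<in> idx k (a + m)"
  have "prefix_slice k m (take a xs) t (drop a xs) = 0" using zero[OF take_idx[OF xs]] by simp
  then show "t xs = 0" using drop_idx[OF xs] by (simp add: prefix_slice_def)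
qed

lemma id_tensor_conv_prefix_slice:
  "id_tensor k a m n L t
     = (\<lambda>xs. if xs \<in> idx k (a + n) then L (prefix_slice k m (take a xs) t) (drop a xs) else 0)"
  unfolding id_tensor_def prefix_slice_def by (rule refl)

lemma prefix_slice_id_tensor:
  assumes "p \<in> idx k a" "L (prefix_slice k m p t) \<in> tens k n"
  shows "prefix_slice k n p (id_tensor k a m n L t) = L (prefix_slice k m p t)"
proof
  fix ys show "prefix_slice k n p (id_tensor k a m n L t) ys = L (prefix_slice k m p t) ys"
    using assms append_idx[OF assms(1)]
    by (auto simp: prefix_slice_def id_tensor_conv_prefix_slice mem_idx tensD)
qed

context
  fixes k a m n :: nat and L :: "tensor \<Rightarrow> tensor" and Z :: "tensor set"
  assumes Z: "fv.subspace Z" "Z \<subseteq> tens k m" and L: "linear_on Z L" "L ` Z \<subseteq> tens k n"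
begin

lemma id_tensor_outer:
  assumes f: "f \<in> tens k a" and h: "h \<in> Z"
  shows "id_tensor k a m n L (outer a f h) = outer a f (L h)"
proof
  fix xs
  have Lh: "L h \<in> tens k n" using L(2) h by blast
  show "id_tensor k a m n L (outer a f h) xs = outer a f (L h) xs"
  proof (cases "xs \<in> idx k (a + n)")
    case True
    then have "length (take a xs) = a" by (simp add: mem_idx)
    then show ?thesis
      using True h Z(2) linear_on_scale[OF L(1) h]
      by (auto simp: id_tensor_conv_prefix_slice prefix_slice_outer outer_apply)
  next
    case False
    then show ?thesis using tensD[OF outer_tens[OF f Lh]] by (simp add: id_tensor_conv_prefix_slice)
  qed
qed

lemma linear_on_id_tensor: "linear_on (tprod a Y Z) (id_tensor k a m n L)"
  unfolding linear_on_def
proof (intro conjI ballI allI)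
  fix x y assume x: "x \<in> tprod a Y Z" and y: "y \<in> tprod a Y Z"
  have "L (prefix_slice k m p (x + y)) = L (prefix_slice k m p x) + L (prefix_slice k m p y)"
    if "length p = a" for p
    unfolding linear_on_add[OF linear_on_prefix_slice UNIV_I UNIV_I]
    using linear_on_add[OF L(1) prefix_slice_tprod[OF Z x that] prefix_slice_tprod[OF Z y that]] .
  then show "id_tensor k a m n L (x + y) = id_tensor k a m n L x + id_tensor k a m n L y"
    by (simp add: id_tensor_conv_prefix_slice fun_eq_iff mem_idx)
next
  fix c x assume x: "x \<in> tprod a Y Z"
  have "L (prefix_slice k m p (fscale c x)) = fscale c (L (prefix_slice k m p x))"
    if "length p = a" for p
    unfolding linear_on_scale[OF linear_on_prefix_slice UNIV_I]
    using linear_on_scale[OF L(1) prefix_slice_tprod[OF Z x that]] .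
  then show "id_tensor k a m n L (fscale c x) = fscale c (id_tensor k a m n L x)"
    by (simp add: id_tensor_conv_prefix_slice fun_eq_iff mem_idx)
qed

lemma id_tensor_tprod:
  assumes Y: "Y \<subseteq> tens k a"
  shows "id_tensor k a m n L ` tprod a Y Z = tprod a Y (L ` Z)"
proof -
  have "id_tensor k a m n L ` {outer a y z |y z. y \<in> Y \<and> z \<in> Z}
      = {outer a y z' |y z'. y \<in> Y \<and> z' \<in> L ` Z}" (is "?lhs = ?rhs")
  proof (intro equalityI subsetI)
    fix t assume "t \<in> ?lhs"
    then obtain y z where "y \<in> Y" "z \<in> Z" "t = id_tensor k a m n L (outer a y z)" by blast
    then show "t \<in> ?rhs" using Y id_tensor_outer by blast
  next
    fix t assume "t \<in> ?rhs"
    then obtain y z where "y \<in> Y" "z \<in> Z" "t = outer a y (L z)" by blast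
    then have "t = id_tensor k a m n L (outer a y z)"
      "outer a y z \<in> {outer a y z |y z. y \<in> Y \<and> z \<in> Z}"
      using Y id_tensor_outer by auto
    then show "t \<in> ?lhs" by blast
  qed
  then show ?thesis
    unfolding tprod_def
    by (simp add: linear_on_image_span[OF linear_on_id_tensor[unfolded tprod_def]])
qed

lemma inj_on_id_tensor:
  assumes Y: "Y \<subseteq> tens k a" and inj: "inj_on L Z"
  shows "inj_on (id_tensor k a m n L) (tprod a Y Z)"
proof (rule inj_on_linear_onI[OF tprod_subspace linear_on_id_tensor])
  fix t assume t: "t \<in> tprod a Y Z" and J0: "id_tensor k a m n L t = 0"
  show "t = 0"
  proof (rule tens_eq_zero_of_prefix_slices)
    show "t \<in> tens k (a + m)" using tprod_tens[OF Y Z(2)] t by blast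
    fix p assume p: "p \<in> idx k a"
    have p_Z: "prefix_slice k m p t \<in> Z" using prefix_slice_tprod[OF Z t] p by (simp add: mem_idx)
    then have "L (prefix_slice k m p t) = prefix_slice k n p (id_tensor k a m n L t)"
      using prefix_slice_id_tensor[OF p] L(2) by auto
    also have "\<dots> = L 0"
      using J0 linear_on_zero[OF L(1) Z(1)] by (simp add: prefix_slice_def fun_eq_iff)
    finally show "prefix_slice k m p t = 0" using inj p_Z fv.subspace_0[OF Z(1)] by (meson inj_onD)
  qed
qed

end

lemma equivariant_map_id_tensor:
  assumes Y: "GL_stable k a Y" and Z: "GL_stable k m Z"
    and L: "equivariant_map k m n Z (tens k n) L"
  shows "equivariant_map k (a + m) (a + n) (tprod a Y Z) (tprod a Y (L ` Z)) (id_tensor k a m n L)"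
proof -
  note Zs = GL_stableD(1,2)[OF Z] and Ls = equivariant_mapD(1,2)[OF L]
  have Yt: "Y \<subseteq> tens k a" using GL_stableD(2)[OF Y] .
  show ?thesis
  proof (rule equivariant_map_tprodI[OF Y Z linear_on_id_tensor[OF Zs Ls]])
    show "id_tensor k a m n L ` tprod a Y Z \<subseteq> tprod a Y (L ` Z)"
      using id_tensor_tprod[OF Zs Ls Yt] by simp
    fix g y z assume g: "g \<in> GL k" and y: "y \<in> Y" and z: "z \<in> Z"
    have "id_tensor k a m n L (outer a (rho k a g y) (rho k m g z))
        = outer a (rho k a g y) (L (rho k m g z))"
      using id_tensor_outer[OF Zs Ls rho_tens GL_stableD(3)[OF Z g z]] .
    also have "\<dots> = rho k (a + n) g (outer a y (L z))"
      using equivariant_mapD(3)[OF L g z] by (simp add: rho_outer)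
    also have "\<dots> = rho k (a + n) g (id_tensor k a m n L (outer a y z))"
      using id_tensor_outer[OF Zs Ls _ z] Yt y by auto
    finally show "id_tensor k a m n L (outer a (rho k a g y) (rho k m g z))
        = rho k (a + n) g (id_tensor k a m n L (outer a y z))" .
  qed
qed

definition swap_tensor :: "nat \<Rightarrow> nat \<Rightarrow> nat \<Rightarrow> tensor \<Rightarrow> tensor" where
  "swap_tensor k a b t = (\<lambda>xs. if xs \<in> idx k (a + b) then t (drop a xs @ take a xs) else 0)"

lemma linear_on_swap_tensor: "linear_on D (swap_tensor k a b)"
  by (simp add: linear_on_def swap_tensor_def fun_eq_iff)

lemma swap_tensor_outer:
  assumes "f \<in> tens k a" "h \<in> tens k b"
  shows "swap_tensor k a b (outer b h f) = outer a f h"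
proof
  fix xs show "swap_tensor k a b (outer b h f) xs = outer a f h xs"
    using tensD[OF outer_tens[OF assms]]
    by (cases "xs \<in> idx k (a + b)") (simp_all add: swap_tensor_def outer_apply mem_idx mult.commute)
qed

lemma swap_tensor_swap_tensor:
  assumes "t \<in> tens k (b + a)"
  shows "swap_tensor k b a (swap_tensor k a b t) = t"
proof
  fix xs show "swap_tensor k b a (swap_tensor k a b t) xs = t xs"
  proof (cases "xs \<in> idx k (b + a)")
    case True
    then have "drop b xs @ take b xs \<in> idx k (a + b)" using append_idx drop_idx take_idx by blast
    then show ?thesis using True by (simp add: swap_tensor_def mem_idx)
  qed (simp add: swap_tensor_def tensD[OF assms])
qed

lemma inj_on_swap_tensor: "inj_on (swap_tensor k a b) (tens k (b + a))"
  by (rule inj_on_inverseI[of _ "swap_tensor k b a"]) (rule swap_tensor_swap_tensor)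

lemma swap_tensor_tprod:
  assumes F: "F \<subseteq> tens k a" and H: "H \<subseteq> tens k b"
  shows "swap_tensor k a b ` tprod b H F = tprod a F H"
proof -
  have "swap_tensor k a b ` {outer b h f |h f. h \<in> H \<and> f \<in> F} = {outer a f h |f h. f \<in> F \<and> h \<in> H}"
    (is "?lhs = ?rhs")
  proof (intro equalityI subsetI)
    fix t assume "t \<in> ?lhs"
    then obtain h f where "h \<in> H" "f \<in> F" "t = swap_tensor k a b (outer b h f)" by blast
    then show "t \<in> ?rhs" using F H swap_tensor_outer by blast
  next
    fix t assume "t \<in> ?rhs"
    then obtain h f where "h \<in> H" "f \<in> F" "t = outer a f h" by blast
    moreover have "f \<in> tens k a" "h \<in> tens k b" using F H \<open>h \<in> H\<close> \<open>f \<in> F\<close> by blast+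
    ultimately have "t = swap_tensor k a b (outer b h f)"
      "outer b h f \<in> {outer b h f |h f. h \<in> H \<and> f \<in> F}"
      by (auto simp: swap_tensor_outer)
    then show "t \<in> ?lhs" by blast
  qed
  then show ?thesis
    unfolding tprod_def by (simp add: linear_on_image_span[OF linear_on_swap_tensor])
qed

lemma equivariant_map_swap_tensor:
  assumes H: "GL_stable k b H" and F: "GL_stable k a F"
  shows "equivariant_map k (b + a) (a + b) (tprod b H F) (tprod a F H) (swap_tensor k a b)"
proof (rule equivariant_map_tprodI[OF H F linear_on_swap_tensor])
  show "swap_tensor k a b ` tprod b H F \<subseteq> tprod a F H"
    using swap_tensor_tprod[OF GL_stableD(2)[OF F] GL_stableD(2)[OF H]] by simp
  fix g h f assume "g \<in> GL k" "h \<in> H" "f \<in> F"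
  then have "f \<in> tens k a" "h \<in> tens k b" using GL_stableD(2)[OF F] GL_stableD(2)[OF H] by blast+
  then show "swap_tensor k a b (outer b (rho k b g h) (rho k a g f))
      = rho k (a + b) g (swap_tensor k a b (outer b h f))"
    by (simp add: swap_tensor_outer rho_tens rho_outer)
qed

lemma mult_tprod_swap:
  assumes F: "GL_stable k a F" and H: "GL_stable k b H"
  shows "mult k (a + b) (tprod a F H) \<pi> = mult k (b + a) (tprod b H F) \<pi>"
proof -
  have "inj_on (swap_tensor k a b) (tprod b H F)"
    using inj_on_swap_tensor tprod_tens[OF GL_stableD(2)[OF H] GL_stableD(2)[OF F]]
    by (rule inj_on_subset)
  then show ?thesis
    using mult_image_inj[OF GL_stable_tprod[OF H F] equivariant_map_swap_tensor[OF H F]]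
      swap_tensor_tprod[OF GL_stableD(2)[OF F] GL_stableD(2)[OF H]] by simp
qed

lemma prefix_slice_swap_tensor:
  assumes "q \<in> idx k b"
  shows "prefix_slice k m q (swap_tensor k b m t) = (\<lambda>ys. if ys \<in> idx k m then t (ys @ q) else 0)"
  using assms append_idx[OF assms]
  by (auto simp: prefix_slice_def swap_tensor_def mem_idx fun_eq_iff)

lemma tensor_id_conv_swap:
  "tensor_id k m n b L = swap_tensor k n b \<circ> id_tensor k b m n L \<circ> swap_tensor k b m"
proof (intro ext)
  fix t xs
  show "tensor_id k m n b L t xs
      = (swap_tensor k n b \<circ> id_tensor k b m n L \<circ> swap_tensor k b m) t xs"
  proof (cases "xs \<in> idx k (n + b)")
    case xs: True
    then have swapped: "drop n xs @ take n xs \<in> idx k (b + n)" and q: "drop n xs \<in> idx k b"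
      using append_idx drop_idx take_idx by blast+
    have "(swap_tensor k n b \<circ> id_tensor k b m n L \<circ> swap_tensor k b m) t xs
        = id_tensor k b m n L (swap_tensor k b m t) (drop n xs @ take n xs)"
      using xs by (simp add: swap_tensor_def[of k n b])
    also have "\<dots> = L (prefix_slice k m (drop n xs) (swap_tensor k b m t)) (take n xs)"
      using swapped q by (simp add: id_tensor_conv_prefix_slice mem_idx)
    also have "\<dots> = tensor_id k m n b L t xs"
      using xs by (simp add: prefix_slice_swap_tensor[OF q] tensor_id_def)
    finally show ?thesis ..
  qed (simp add: tensor_id_def swap_tensor_def)
qed

context
  fixes k m n b :: nat and L :: "tensor \<Rightarrow> tensor" and Z S :: "tensor set"
  assumes Z: "fv.subspace Z" "Z \<subseteq> tens k m" and S: "S \<subseteq> tens k b"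
    and L: "linear_on Z L" "L ` Z \<subseteq> tens k n"
begin

lemma tensor_id_tprod: "tensor_id k m n b L ` tprod m Z S = tprod n (L ` Z) S"
proof -
  have LZ: "L ` Z \<subseteq> tens k n" using L(2) .
  show ?thesis
    unfolding tensor_id_conv_swap image_comp[symmetric]
    by (simp add: swap_tensor_tprod[OF S Z(2)] id_tensor_tprod[OF Z L S] swap_tensor_tprod[OF LZ S])
qed

lemma inj_on_tensor_id:
  assumes inj: "inj_on L Z"
  shows "inj_on (tensor_id k m n b L) (tprod m Z S)"
  unfolding tensor_id_conv_swap
proof (intro comp_inj_on)
  show "inj_on (swap_tensor k b m) (tprod m Z S)"
    by (rule inj_on_subset[OF inj_on_swap_tensor tprod_tens[OF Z(2) S]])
  show "inj_on (id_tensor k b m n L) (swap_tensor k b m ` tprod m Z S)"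
    unfolding swap_tensor_tprod[OF S Z(2)] by (rule inj_on_id_tensor[OF Z L S inj])
  show "inj_on (swap_tensor k n b) (id_tensor k b m n L ` swap_tensor k b m ` tprod m Z S)"
    unfolding swap_tensor_tprod[OF S Z(2)] id_tensor_tprod[OF Z L S]
    by (rule inj_on_subset[OF inj_on_swap_tensor tprod_tens[OF S L(2)]])
qed

end

lemma equivariant_map_tensor_id:
  assumes Z: "GL_stable k m Z" and S: "GL_stable k b S"
    and L: "equivariant_map k m n Z (tens k n) L"
  shows "equivariant_map k (m + b) (n + b) (tprod m Z S) (tprod n (L ` Z) S) (tensor_id k m n b L)"
  unfolding tensor_id_conv_swap
proof (intro equivariant_map_comp)
  show "equivariant_map k (m + b) (b + m) (tprod m Z S) (tprod b S Z) (swap_tensor k b m)"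
    by (rule equivariant_map_swap_tensor[OF Z S])
  show "equivariant_map k (b + m) (b + n) (tprod b S Z) (tprod b S (L ` Z)) (id_tensor k b m n L)"
    by (rule equivariant_map_id_tensor[OF S Z L])
  have "GL_stable k n (L ` Z)" by (rule GL_stable_image[OF Z L order_refl])
  then show "equivariant_map k (b + n) (n + b) (tprod b S (L ` Z)) (tprod n (L ` Z) S)
      (swap_tensor k n b)"
    by (rule equivariant_map_swap_tensor[OF S])
qed

section \<open>Complete reducibility by the unitary trick\<close>

definition tens_inner :: "nat \<Rightarrow> nat \<Rightarrow> tensor \<Rightarrow> tensor \<Rightarrow> complex" where
  "tens_inner k n u v = (\<Sum>xs\<in>idx k n. u xs * cnj (v xs))"

lemma tens_inner_left [simp]:
  "tens_inner k n (u + u') v = tens_inner k n u v + tens_inner k n u' v"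
  "tens_inner k n (u - u') v = tens_inner k n u v - tens_inner k n u' v"
  "tens_inner k n (fscale c u) v = c * tens_inner k n u v"
  "tens_inner k n 0 v = 0"
  by (simp_all add: tens_inner_def algebra_simps sum.distrib sum_subtractf sum_distrib_left)

lemma tens_inner_right [simp]:
  "tens_inner k n u (v + v') = tens_inner k n u v + tens_inner k n u v'"
  "tens_inner k n u (v - v') = tens_inner k n u v - tens_inner k n u v'"
  "tens_inner k n u (fscale c v) = cnj c * tens_inner k n u v"
  "tens_inner k n u 0 = 0"
  by (simp_all add: tens_inner_def algebra_simps sum.distrib sum_subtractf sum_distrib_left)

lemma tens_inner_self_eq_zero:
  assumes u: "u \<in> tens k n" and "tens_inner k n u u = 0"
  shows "u = 0"
proof -
  have "tens_inner k n u u = of_real (\<Sum>xs\<in>idx k n. (cmod (u xs))\<^sup>2)"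
    unfolding tens_inner_def of_real_sum complex_norm_square ..
  then have "(\<Sum>xs\<in>idx k n. (cmod (u xs))\<^sup>2) = 0" using assms(2) by (metis of_real_eq_0_iff)
  then have "\<forall>xs\<in>idx k n. (cmod (u xs))\<^sup>2 = 0" by (simp add: sum_nonneg_eq_0_iff)
  then show ?thesis by (intro tens_eq_zeroI[OF u]) simp
qed

lemma orthogonal_span:
  assumes "\<forall>y\<in>G. tens_inner k n u y = 0" and "y \<in> fv.span G"
  shows "tens_inner k n u y = 0"
proof -
  have "fv.subspace {y. tens_inner k n u y = 0}" by (simp add: fv.subspace_def)
  then show ?thesis using fv.span_induct[OF assms(2)] assms(1) by blast
qed

lemma orthogonal_correction:
  assumes w: "w \<in> tens k n" "w \<noteq> 0" "\<forall>y\<in>F. tens_inner k n w y = 0"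
    and u: "\<forall>y\<in>F. tens_inner k n u y = 0"
  obtains c where "\<forall>y\<in>insert w F. tens_inner k n (u - fscale c w) y = 0"
proof
  define c where "c = tens_inner k n u w / tens_inner k n w w"
  have "tens_inner k n w w \<noteq> 0" using w(1,2) tens_inner_self_eq_zero by blast
  then show "\<forall>y\<in>insert w F. tens_inner k n (u - fscale c w) y = 0"
    using w(3) u by (simp add: c_def)
qed

lemma orthogonal_projection_exists:
  assumes "finite F" "F \<subseteq> tens k n"
  shows "\<exists>\<kappa>\<in>fv.span F. \<forall>y\<in>F. tens_inner k n (x - \<kappa>) y = 0"
  using assms
proof (induction F arbitrary: x rule: finite_induct)
  case empty
  then show ?case using fv.span_zero by blast
next
  case (insert v F)
  have span_mono: "fv.span F \<subseteq> fv.span (insert v F)" by (rule fv.span_mono) blast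
  obtain \<kappa>x where \<kappa>x: "\<kappa>x \<in> fv.span F" "\<forall>y\<in>F. tens_inner k n (x - \<kappa>x) y = 0"
    using insert by blast
  obtain \<kappa>v where \<kappa>v: "\<kappa>v \<in> fv.span F" "\<forall>y\<in>F. tens_inner k n (v - \<kappa>v) y = 0"
    using insert by blast
  show ?case
  proof (cases "v \<in> fv.span F")
    case True
    then have "\<forall>y\<in>insert v F. tens_inner k n (x - \<kappa>x) y = 0"
      using \<kappa>x(2) orthogonal_span[OF \<kappa>x(2)] by blast
    then show ?thesis using span_mono \<kappa>x(1) by blast
  next
    case False
    define w where "w = v - \<kappa>v"
    have "w \<in> tens k n"
      using insert.prems fv.span_minimal[OF _ tens_subspace, of F k n] \<kappa>v(1) unfolding w_def
      by (intro fv.subspace_diff[OF tens_subspace]) auto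
    moreover have "w \<noteq> 0" using False \<kappa>v(1) by (auto simp: w_def)
    ultimately obtain c where c: "\<forall>y\<in>insert w F. tens_inner k n ((x - \<kappa>x) - fscale c w) y = 0"
      using orthogonal_correction \<kappa>v(2) \<kappa>x(2) unfolding w_def by blast
    have "w \<in> fv.span (insert w F)" by (rule fv.span_base) simp
    moreover have "\<kappa>v \<in> fv.span (insert w F)" using \<kappa>v(1) fv.span_mono[of F "insert w F"] by blast
    ultimately have "w + \<kappa>v \<in> fv.span (insert w F)" by (rule fv.span_add)
    then have "v \<in> fv.span (insert w F)" by (simp add: w_def)
    then have "\<forall>y\<in>insert v F. tens_inner k n ((x - \<kappa>x) - fscale c w) y = 0"
      using c orthogonal_span[OF c] by blast
    moreover have "x - (\<kappa>x + fscale c w) = (x - \<kappa>x) - fscale c w" by (simp add: algebra_simps)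
    ultimately have "\<forall>y\<in>insert v F. tens_inner k n (x - (\<kappa>x + fscale c w)) y = 0" by (simp only:)
    moreover have "\<kappa>x + fscale c w \<in> fv.span (insert v F)"
      using span_mono \<kappa>x(1) \<kappa>v(1) unfolding w_def
      by (intro fv.span_add fv.span_scale fv.span_diff) (auto intro: fv.span_base)
    ultimately show ?thesis by blast
  qed
qed

definition conj_transpose :: "(nat \<Rightarrow> nat \<Rightarrow> complex) \<Rightarrow> nat \<Rightarrow> nat \<Rightarrow> complex" where
  "conj_transpose g = (\<lambda>i j. cnj (g j i))"

lemma conj_transpose_GL:
  assumes "g \<in> GL k"
  shows "conj_transpose g \<in> GL k"
proof -
  obtain h where h1: "\<forall>i<k. \<forall>j<k. (\<Sum>l<k. g i l * h l j) = (if i = j then 1 else 0)"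
    and h2: "\<forall>i<k. \<forall>j<k. (\<Sum>l<k. h i l * g l j) = (if i = j then 1 else 0)"
    using assms by (auto simp: GL_def)
  have "(\<Sum>l<k. conj_transpose g i l * conj_transpose h l j) = (if i = j then 1 else 0)"
    if "i < k" "j < k" for i j
  proof -
    have "(\<Sum>l<k. conj_transpose g i l * conj_transpose h l j) = cnj (\<Sum>l<k. h j l * g l i)"
      by (simp add: conj_transpose_def mult.commute)
    also have "\<dots> = (if i = j then 1 else 0)" using h2 that by auto
    finally show ?thesis .
  qed
  moreover have "(\<Sum>l<k. conj_transpose h i l * conj_transpose g l j) = (if i = j then 1 else 0)"
    if "i < k" "j < k" for i j
  proof -
    have "(\<Sum>l<k. conj_transpose h i l * conj_transpose g l j) = cnj (\<Sum>l<k. g j l * h l i)"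
      by (simp add: conj_transpose_def mult.commute)
    also have "\<dots> = (if i = j then 1 else 0)" using h1 that by auto
    finally show ?thesis .
  qed
  ultimately show ?thesis unfolding GL_def by blast
qed

lemma tens_inner_rho:
  "tens_inner k n (rho k n g u) v = tens_inner k n u (rho k n (conj_transpose g) v)"
proof -
  have "tens_inner k n (rho k n g u) v
      = (\<Sum>xs\<in>idx k n. \<Sum>js\<in>idx k n. (\<Prod>m<n. g (xs ! m) (js ! m)) * u js * cnj (v xs))"
    by (simp add: tens_inner_def rho_def sum_distrib_right)
  also have "\<dots> = (\<Sum>js\<in>idx k n. \<Sum>xs\<in>idx k n. (\<Prod>m<n. g (xs ! m) (js ! m)) * u js * cnj (v xs))"
    by (rule sum.swap)
  also have "\<dots> = tens_inner k n u (rho k n (conj_transpose g) v)"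
    by (simp add: tens_inner_def rho_def conj_transpose_def sum_distrib_left mult_ac)
  finally show ?thesis .
qed

text \<open>Weyl's unitary trick: the adjoint of \<open>rho k n g\<close> is \<open>rho k n (conj_transpose g)\<close>
  and \<open>GL k\<close> is closed under \<open>conj_transpose\<close>, so orthogonal complements of stable
  subspaces are stable.\<close>

lemma GL_stable_orthogonal_complement:
  assumes X: "GL_stable k n X" and K: "GL_stable k n K"
  shows "GL_stable k n {x \<in> X. \<forall>\<kappa>\<in>K. tens_inner k n x \<kappa> = 0}" (is "GL_stable k n ?W")
  unfolding GL_stable_def
proof (intro conjI ballI)
  note Xs = GL_stableD[OF X]
  show "fv.subspace ?W"
  proof (rule fv.subspaceI)
    show "0 \<in> ?W" using fv.subspace_0[OF Xs(1)] by simp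
    show "x + y \<in> ?W" if "x \<in> ?W" "y \<in> ?W" for x y using that fv.subspace_add[OF Xs(1)] by simp
    show "fscale c x \<in> ?W" if "x \<in> ?W" for c x using that fv.subspace_scale[OF Xs(1)] by simp
  qed
  show "?W \<subseteq> tens k n" using Xs(2) by blast
  fix g w assume g: "g \<in> GL k" and w: "w \<in> ?W"
  have "tens_inner k n (rho k n g w) \<kappa> = 0" if "\<kappa> \<in> K" for \<kappa>
    using w GL_stableD(3)[OF K conj_transpose_GL[OF g] that] by (simp add: tens_inner_rho)
  then show "rho k n g w \<in> ?W" using Xs(3)[OF g] w by simp
qed

lemma orthogonal_decomposition:
  assumes K: "fv.subspace K" "K \<subseteq> tens k n"
  obtains \<kappa> where "\<kappa> \<in> K" "\<forall>\<kappa>'\<in>K. tens_inner k n (x - \<kappa>) \<kappa>' = 0"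
proof -
  obtain B where B: "B \<subseteq> K" "fv.independent B" "K \<subseteq> fv.span B" "card B = fv.dim K"
    by (rule fv.basis_exists)
  have "finite B"
    using fv.independent_card_le_dim_finite_span[OF B(2,1)
        order.trans[OF K(2) tens_subset_span_delta]]
    by simp
  then obtain \<kappa> where \<kappa>: "\<kappa> \<in> fv.span B" "\<forall>y\<in>B. tens_inner k n (x - \<kappa>) y = 0"
    using orthogonal_projection_exists[OF _ order.trans[OF B(1) K(2)]] by blast
  show ?thesis
  proof
    show "\<kappa> \<in> K" using \<kappa>(1) fv.span_minimal[OF B(1) K(1)] by blast
    show "\<forall>\<kappa>'\<in>K. tens_inner k n (x - \<kappa>) \<kappa>' = 0" using orthogonal_span[OF \<kappa>(2)] B(3) by blast
  qed
qed

lemma stable_complement_of_kernel: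
  assumes X: "GL_stable k m X" and P: "equivariant_map k m n X E P"
  obtains W where "GL_stable k m W" "W \<subseteq> X" "inj_on P W" "P ` W = P ` X"
proof -
  define K where "K = {x \<in> X. P x = 0}"
  have K: "GL_stable k m K" unfolding K_def by (rule GL_stable_kernel[OF X P])
  define W where "W = {x \<in> X. \<forall>\<kappa>\<in>K. tens_inner k m x \<kappa> = 0}"
  have W: "GL_stable k m W" "W \<subseteq> X"
    unfolding W_def by (auto intro: GL_stable_orthogonal_complement[OF X K])
  note Xs = GL_stableD(1,2)[OF X] and P_lin = equivariant_mapD(1)[OF P]
  have "inj_on P W"
  proof (rule inj_on_linear_onI[OF GL_stableD(1)[OF W(1)] linear_on_subset[OF P_lin W(2)]])
    fix w assume "w \<in> W" "P w = 0"
    then have "w \<in> tens k m" "tens_inner k m w w = 0" using Xs(2) by (auto simp: W_def K_def)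
    then show "w = 0" by (rule tens_inner_self_eq_zero)
  qed
  moreover have "P ` X \<subseteq> P ` W"
  proof
    fix y assume "y \<in> P ` X"
    then obtain x where x: "x \<in> X" "y = P x" by blast
    obtain \<kappa> where \<kappa>: "\<kappa> \<in> K" "\<forall>\<kappa>'\<in>K. tens_inner k m (x - \<kappa>) \<kappa>' = 0"
      using orthogonal_decomposition GL_stableD(1,2)[OF K] by metis
    have "\<kappa> \<in> X" "P \<kappa> = 0" using \<kappa>(1) by (simp_all add: K_def)
    then have "x - \<kappa> \<in> W" using \<kappa>(2) fv.subspace_diff[OF Xs(1) x(1)] by (simp add: W_def)
    moreover have "P x = P (x - \<kappa>) + P \<kappa>"
      using linear_on_add[OF P_lin fv.subspace_diff[OF Xs(1) x(1) \<open>\<kappa> \<in> X\<close>] \<open>\<kappa> \<in> X\<close>] by simp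
    ultimately show "y \<in> P ` W" using x(2) \<open>P \<kappa> = 0\<close> by simp
  qed
  ultimately show ?thesis using that W by blast
qed

lemma hwv_tprod_subset_tensor_id_image:
  assumes X: "GL_stable k m X" and S: "GL_stable k b S"
    and P: "equivariant_map k m n X (tens k n) P"
  shows "hwv k (n + b) (tprod n (P ` X) S) \<pi> \<subseteq> tensor_id k m n b P ` hwv k (m + b) (tprod m X S) \<pi>"
proof -
  obtain W where W: "GL_stable k m W" "W \<subseteq> X" "inj_on P W" "P ` W = P ` X"
    by (rule stable_complement_of_kernel[OF X P])
  have P_W: "equivariant_map k m n W (tens k n) P"
    by (rule equivariant_map_mono[OF P W(2) order_refl])
  note Ws = GL_stableD(1,2)[OF W(1)] and Ps = equivariant_mapD(1,2)[OF P_W]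
  have "hwv k (n + b) (tprod n (P ` X) S) \<pi> = hwv k (n + b) (tensor_id k m n b P ` tprod m W S) \<pi>"
    using tensor_id_tprod[OF Ws GL_stableD(2)[OF S] Ps] W(4) by simp
  also have "\<dots> = tensor_id k m n b P ` hwv k (m + b) (tprod m W S) \<pi>"
    by (rule hwv_image_inj[OF GL_stable_tprod[OF W(1) S] equivariant_map_tensor_id[OF W(1) S P_W]
          inj_on_tensor_id[OF Ws GL_stableD(2)[OF S] Ps W(3)]])
  also have "\<dots> \<subseteq> tensor_id k m n b P ` hwv k (m + b) (tprod m X S) \<pi>"
    using hwv_mono[OF tprod_mono[OF W(2) order_refl]] by blast
  finally show ?thesis .
qed

section \<open>The image of the Young flattening\<close>

lemma hwv_comp_image_eq:
  assumes A: "GL_stable k a A" and B: "GL_stable k b B"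
    and J: "equivariant_map k a b A B J" "inj_on J A" and mult: "mult k b B \<pi> \<le> mult k a A \<pi>"
    and Q: "equivariant_map k b c B C Q" and onto: "hwv k c C \<pi> \<subseteq> Q ` hwv k b B \<pi>"
  shows "hwv k c (Q ` J ` A) \<pi> = hwv k c C \<pi>"
proof -
  have "hwv k b (J ` A) \<pi> = hwv k b B \<pi>"
    using mult mult_image_inj[OF A J(1,2)] equivariant_mapD(2)[OF J(1)] GL_stableD(2)[OF B]
      subspace_linear_on_image[OF GL_stableD(1)[OF A] equivariant_mapD(1)[OF J(1)]]
    by (intro hwv_eq_of_mult_le) simp_all
  then have "hwv k c C \<pi> \<subseteq> Q ` hwv k b (J ` A) \<pi>" using onto by simp
  also have "\<dots> \<subseteq> hwv k c (Q ` J ` A) \<pi>"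
    using hwv_image_subset[OF equivariant_map_mono[OF Q equivariant_mapD(2)[OF J(1)] order_refl]] .
  finally have C_subset: "hwv k c C \<pi> \<subseteq> hwv k c (Q ` J ` A) \<pi>" .
  have "Q ` J ` A \<subseteq> C" using equivariant_mapD(2)[OF J(1)] equivariant_mapD(2)[OF Q] by blast
  then have "hwv k c (Q ` J ` A) \<pi> \<subseteq> hwv k c C \<pi>" by (rule hwv_mono)
  then show ?thesis using C_subset by (rule subset_antisym)
qed

lemma mult_tensor_id_id_tensor_image:
  fixes k m n M :: nat and \<pi> :: "nat \<Rightarrow> nat"
    and Smu Snu :: "tensor set" and \<iota> P :: "tensor \<Rightarrow> tensor"
  defines "V \<equiv> tens k 1"
  assumes Smu: "GL_stable k m Smu" and Snu: "irreducible_rep k n Snu"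
    and \<iota>: "equivariant_map k n (1 + m) Snu (tprod 1 V Smu) \<iota>" "\<exists>s\<in>Snu. \<iota> s \<noteq> 0"
    and P: "equivariant_map k (m + 1) n (tprod m Smu V) Snu P" "\<exists>s\<in>tprod m Smu V. P s \<noteq> 0"
    and mult_A: "mult k (m + n) (tprod m Smu Snu) \<pi> = M"
    and mult_B: "mult k (m + 1 + m) (tprod (m + 1) (tprod m Smu V) Smu) \<pi> = M"
  shows "mult k (n + m)
    ((\<lambda>t. tensor_id k (m + 1) n m P (id_tensor k m n (1 + m) \<iota> t)) ` tprod m Smu Snu) \<pi> = M"
proof -
  define X where "X = tprod m Smu V"
  have Snu_stable: "GL_stable k n Snu" using Snu by (simp add: irreducible_rep_def)
  have X: "GL_stable k (m + 1) X"
    unfolding X_def V_def by (rule GL_stable_tprod[OF Smu GL_stable_tens])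
  have \<iota>_tens: "equivariant_map k n (1 + m) Snu (tens k (1 + m)) \<iota>"
    using equivariant_map_mono[OF \<iota>(1) order_refl tprod_tens] GL_stableD(2)[OF Smu]
    by (simp add: V_def)
  have "tprod m Smu (\<iota> ` Snu) \<subseteq> tprod (m + 1) X Smu"
    using tprod_mono[OF order_refl equivariant_mapD(2)[OF \<iota>(1)]] tprod_assoc_subset
    unfolding X_def by blast
  then have J: "equivariant_map k (m + n) (m + 1 + m) (tprod m Smu Snu) (tprod (m + 1) X Smu)
      (id_tensor k m n (1 + m) \<iota>)"
    using equivariant_map_mono[OF equivariant_map_id_tensor[OF Smu Snu_stable \<iota>_tens] order_refl]
    by (simp add: add.assoc)
  have J_inj: "inj_on (id_tensor k m n (1 + m) \<iota>) (tprod m Smu Snu)"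
    using equivariant_mapD(1,2)[OF \<iota>_tens] GL_stableD(1,2)[OF Snu_stable]
    by (intro inj_on_id_tensor GL_stableD(2)[OF Smu] irreducible_equivariant_inj[OF Snu \<iota>])
  have P_tens: "equivariant_map k (m + 1) n X (tens k n) P"
    using equivariant_map_mono[OF P(1)] GL_stableD(2)[OF Snu_stable] unfolding X_def by blast
  have "P ` X = Snu" using irreducible_equivariant_onto[OF X Snu] P unfolding X_def by blast
  then have "hwv k (n + m)
      (tensor_id k (m + 1) n m P ` id_tensor k m n (1 + m) \<iota> ` tprod m Smu Snu) \<pi>
      = hwv k (n + m) (tprod n Snu Smu) \<pi>"
    using hwv_tprod_subset_tensor_id_image[OF X Smu P_tens]
      equivariant_map_tensor_id[OF X Smu P_tens] mult_A mult_B
    by (intro hwv_comp_image_eq[OF GL_stable_tprod[OF Smu Snu_stable] GL_stable_tprod[OF X Smu]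
          J J_inj])
      (simp_all add: X_def)
  then show ?thesis
    using mult_tprod_swap[OF Snu_stable Smu] mult_A by (simp add: mult_def image_image)
qed

theorem proposition2:
  fixes k M :: nat and \<mu> \<nu> \<pi> :: "nat \<Rightarrow> nat"
    and Smu Snu :: "(nat list \<Rightarrow> complex) set"
    and \<iota> P :: "(nat list \<Rightarrow> complex) \<Rightarrow> (nat list \<Rightarrow> complex)"
  assumes "partition_k k \<mu>" and "partition_k k \<nu>"
    and "\<exists>j. \<nu> = \<mu>(j := Suc (\<mu> j))"
    and "schur_module k \<mu> Smu" and "schur_module k \<nu> Snu"
    and "equivariant_map k (psize k \<nu>) (1 + psize k \<mu>) Snu (tprod 1 (tens k 1) Smu) \<iota>"
    and "\<exists>s\<in>Snu. \<iota> s \<noteq> 0"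
    and "equivariant_map k (psize k \<mu> + 1) (psize k \<nu>) (tprod (psize k \<mu>) Smu (tens k 1)) Snu P"
    and "\<exists>s\<in>tprod (psize k \<mu>) Smu (tens k 1). P s \<noteq> 0"
    and "mult k (psize k \<mu> + psize k \<nu>) (tprod (psize k \<mu>) Smu Snu) \<pi> = M"
    and "mult k (psize k \<mu> + 1 + psize k \<mu>)
           (tprod (psize k \<mu> + 1) (tprod (psize k \<mu>) Smu (tens k 1)) Smu) \<pi> = M"
  shows "mult k (psize k \<nu> + psize k \<mu>)
           ((\<lambda>t. tensor_id k (psize k \<mu> + 1) (psize k \<nu>) (psize k \<mu>) P
                   (id_tensor k (psize k \<mu>) (psize k \<nu>) (1 + psize k \<mu>) \<iota> t))
              ` tprod (psize k \<mu>) Smu Snu) \<pi> = M"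
proof (rule mult_tensor_id_id_tensor_image[OF _ _ assms(6-11)])
  show "GL_stable k (psize k \<mu>) Smu"
    using assms(4) by (simp add: schur_module_def irreducible_rep_def)
  show "irreducible_rep k (psize k \<nu>) Snu" using assms(5) by (simp add: schur_module_def)
qed

end
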